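(* Assume conditions (A1)–(A5) below. Then for almost every $\omega\in\Omega$ there exists a constant $\hat\rho(\omega)>0$ such that the map $\theta\mapsto\max_{W\in\mathcal W}F(W,H(\theta,\omega))$ is $\hat\rho(\omega)$-weakly convex on $\Theta$.
   Context: Let $(\Xi,\mathscr F,P)$ be a complete probability space and $\omega:\Xi\to\Omega$ a random element; $\mathcal Z_p$ is the space of measurable real functions of $\omega$ with finite $p$-th absolute moment. Let $S,M_U$ be positive integers, $\Theta\subset\mathbb R^S$, $\mathcal W\subset\mathbb C^{M_U}$, $F:\mathbb C^{M_U}\times\mathbb C^{M_U}\to\mathbb R$, $H:\mathcal U\times\Omega\to\mathbb C^{M_U}$ with $\mathcal U\supset\Theta$ open. A function $g$ is $\rho$-weakly convex (resp. concave) on a set if $g+\frac\rho2\|\cdot\|^2$ (resp. $-g+\frac\rho2\|\cdot\|^2$) is convex there. Conditions: (A1) $F$ is twice continuously real-differentiable; (A2) $\Theta,\mathcal W$ compact, $\Theta$ convex; (A3) there are constants $B_H,L_{H,0},L_{H,1}$ such that for a.e. $\omega$, $H(\cdot,\omega)$ is bounded by $B_H$ on $\Theta$, twice continuously differentiable on $\mathcal U$, $L_{H,0}$-Lipschitz with $L_{H,1}$-Lipschitz gradient on $\Theta$; (A4) there is a positive $\tilde\rho\in\mathcal Z_1$ such that for a.e. $\omega$, $\theta\mapsto\max_{W\in\mathcal W}F(W,H(\theta,\omega))$ is $\tilde\rho(\omega)$-weakly concave on $\Theta$; (A5) for all $\theta\in\Theta$ and any maximizer $W^*(\theta,\omega)\in\arg\max_{W\in\mathcal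 W}F(W,H(\theta,\omega))$, $\omega\mapsto F(W^*(\theta,\omega),H(\theta,\omega))$ is in $\mathcal Z_2$ and bounded below, and i.i.d. samples of $\omega$ can be drawn. *)

theory Defs
  imports "HOL-Probability.Probability"
begin

definition weakly_convex_on :: "real \<Rightarrow> 'a::real_normed_vector set \<Rightarrow> ('a \<Rightarrow> real) \<Rightarrow> bool" where
  "weakly_convex_on \<rho> S g \<longleftrightarrow> convex_on S (\<lambda>x. g x + \<rho> / 2 * (norm x)^2)"

definition weakly_concave_on :: "real \<Rightarrow> 'a::real_normed_vector set \<Rightarrow> ('a \<Rightarrow> real) \<Rightarrow> bool" where
  "weakly_concave_on \<rho> S g \<longleftrightarrow> convex_on S (\<lambda>x. - g x + \<rho> / 2 * (norm x)^2)"

definition C2_on :: "'a::real_normed_vector set \<Rightarrow> ('a \<Rightarrow> 'b::real_normed_vector) \<Rightarrow> bool" where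
  "C2_on U f \<longleftrightarrow> (\<exists>f' f''.
      (\<forall>x\<in>U. (f has_derivative blinfun_apply (f' x)) (at x)
             \<and> (f' has_derivative blinfun_apply (f'' x)) (at x))
      \<and> continuous_on U f'')"

end

theory Submission
  imports Defs
begin

(* For fixed \<omega>, the derivative of \<theta> \<mapsto> F(W, H(\<theta>,\<omega>)) is D F(W, H) \<circ> (0, D H), and it is
   Lipschitz on \<Theta> with a constant independent of W \<in> \<W>: all points (W, H(\<theta>,\<omega>)) lie in one
   compact ball, on which D F is bounded and Lipschitz because F is C^2, while H and D H are
   Lipschitz and D H is bounded on the compact set \<Theta>. A function with L-Lipschitz derivative
   on a convex set is L-weakly convex (by the descent lemma), and a pointwise bounded supremum
   of L-weakly convex functions is again L-weakly convex.
   Only (A1), (A2) and the two Lipschitz conditions of (A3) are used. *)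

lemma lipschitz_derivative_quadratic_lower_bound:
  fixes \<phi> :: "'a::real_normed_vector \<Rightarrow> real"
  assumes S: "convex S"
    and der: "\<And>x. x \<in> S \<Longrightarrow> (\<phi> has_derivative blinfun_apply (\<phi>' x)) (at x)"
    and lip: "L-lipschitz_on S \<phi>'"
    and x: "x \<in> S" and z: "z \<in> S"
  shows "\<phi> z + \<phi>' z (x - z) - L / 2 * (norm (x - z))^2 \<le> \<phi> x"
proof -
  define d where "d = x - z"
  define g where "g s = \<phi> (z + s *\<^sub>R d) - s * \<phi>' z d + L / 2 * s^2 * (norm d)^2" for s
  define g' where "g' s = \<phi>' (z + s *\<^sub>R d) d - \<phi>' z d + L * s * (norm d)^2" for s
  have segment: "z + s *\<^sub>R d \<in> S" if "s \<in> {0..1}" for s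
  proof -
    have "z + s *\<^sub>R d = (1 - s) *\<^sub>R z + s *\<^sub>R x" by (simp add: d_def algebra_simps)
    with that S x z show ?thesis by (auto intro: convexD)
  qed
  have "(g has_real_derivative g' s) (at s)" if "s \<in> {0..1}" for s
  proof -
    have "((\<lambda>s. z + s *\<^sub>R d) has_derivative (\<lambda>t. t *\<^sub>R d)) (at s)"
      by (auto intro!: derivative_eq_intros)
    from has_derivative_compose[OF this der[OF segment[OF that]]]
    have "(g has_derivative (*) (g' s)) (at s)"
      unfolding g_def g'_def
      by (auto intro!: derivative_eq_intros simp: blinfun.scaleR_right power2_eq_square algebra_simps)
    then show ?thesis by (simp add: has_field_derivative_def)
  qed
  moreover have "g' s \<ge> 0" if "s \<in> {0..1}" for s
  proof -
    have "\<bar>\<phi>' (z + s *\<^sub>R d) d - \<phi>' z d\<bar> \<le> norm (\<phi>' (z + s *\<^sub>R d) - \<phi>' z) * norm d"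
      by (metis blinfun.diff_left norm_blinfun real_norm_def)
    also have "\<dots> \<le> L * norm (s *\<^sub>R d) * norm d"
      using lipschitz_on_normD[OF lip segment[OF that] z]
      by (intro mult_right_mono) auto
    also have "\<dots> = L * s * (norm d)^2" using that by (simp add: power2_eq_square)
    finally show ?thesis unfolding g'_def by linarith
  qed
  ultimately have "g 0 \<le> g 1" by (intro deriv_nonneg_imp_mono[of 0 1 g g']) auto
  then show ?thesis unfolding g_def d_def by simp
qed

lemma norm_convex_combination_square:
  fixes x y :: "'a::real_inner"
  assumes "u + v = 1"
  shows "u * (norm x)^2 + v * (norm y)^2 = (norm (u *\<^sub>R x + v *\<^sub>R y))^2 + u * v * (norm (x - y))^2"
proof -
  have v: "v = 1 - u" using assms by simp
  show ?thesis unfolding v power2_norm_eq_inner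
    by (simp add: inner_diff_left inner_diff_right inner_add_left inner_add_right
        inner_commute algebra_simps power2_eq_square)
qed

lemma weakly_convex_on_if_lipschitz_derivative:
  fixes \<phi> :: "'a::real_inner \<Rightarrow> real"
  assumes S: "convex S"
    and der: "\<And>x. x \<in> S \<Longrightarrow> (\<phi> has_derivative blinfun_apply (\<phi>' x)) (at x)"
    and lip: "L-lipschitz_on S \<phi>'"
  shows "weakly_convex_on L S \<phi>"
  unfolding weakly_convex_on_def convex_on_def
proof (intro conjI S ballI allI impI)
  fix x y :: 'a and u v :: real
  assume x: "x \<in> S" and y: "y \<in> S" and u: "0 \<le> u" and v: "0 \<le> v" and uv: "u + v = 1"
  define z where "z = u *\<^sub>R x + v *\<^sub>R y"
  have z: "z \<in> S" unfolding z_def using S x y u v uv by (auto intro: convexD)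
  have "x - z = v *\<^sub>R (x - y)" "y - z = - (u *\<^sub>R (x - y))"
    unfolding z_def using uv by (auto simp: algebra_simps simp flip: scaleR_add_left)
  then have "\<phi> z + v * \<phi>' z (x - y) - L / 2 * (v^2 * (norm (x - y))^2) \<le> \<phi> x"
    and "\<phi> z - u * \<phi>' z (x - y) - L / 2 * (u^2 * (norm (x - y))^2) \<le> \<phi> y"
    using lipschitz_derivative_quadratic_lower_bound[OF S der lip x z]
      lipschitz_derivative_quadratic_lower_bound[OF S der lip y z]
    by (simp_all add: blinfun.scaleR_right blinfun.minus_right power_mult_distrib)
  then have "u * (\<phi> z + v * \<phi>' z (x - y) - L / 2 * (v^2 * (norm (x - y))^2))
      + v * (\<phi> z - u * \<phi>' z (x - y) - L / 2 * (u^2 * (norm (x - y))^2)) \<le> u * \<phi> x + v * \<phi> y"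
    using u v by (intro add_mono mult_left_mono)
  moreover have "u * (\<phi> z + v * \<phi>' z (x - y) - L / 2 * (v^2 * (norm (x - y))^2))
      + v * (\<phi> z - u * \<phi>' z (x - y) - L / 2 * (u^2 * (norm (x - y))^2))
      = (u + v) * \<phi> z - L / 2 * (u * v * (u + v) * (norm (x - y))^2)"
    by (simp add: algebra_simps power2_eq_square)
  ultimately have lower: "\<phi> z - L / 2 * (u * v * (norm (x - y))^2) \<le> u * \<phi> x + v * \<phi> y"
    using uv by simp
  have "\<phi> z + L / 2 * (norm z)^2 \<le> u * \<phi> x + v * \<phi> y + L / 2 * ((norm z)^2 + u * v * (norm (x - y))^2)"
    using lower by (simp add: algebra_simps)
  also have "\<dots> = u * \<phi> x + v * \<phi> y + L / 2 * (u * (norm x)^2 + v * (norm y)^2)"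
    unfolding z_def norm_convex_combination_square[OF uv] ..
  also have "\<dots> = u * (\<phi> x + L / 2 * (norm x)^2) + v * (\<phi> y + L / 2 * (norm y)^2)"
    by (simp add: algebra_simps)
  finally show "\<phi> (u *\<^sub>R x + v *\<^sub>R y) + L / 2 * (norm (u *\<^sub>R x + v *\<^sub>R y))^2
      \<le> u * (\<phi> x + L / 2 * (norm x)^2) + v * (\<phi> y + L / 2 * (norm y)^2)"
    unfolding z_def .
qed

lemma weakly_convex_on_SUP:
  fixes \<phi> :: "'i \<Rightarrow> 'a::real_normed_vector \<Rightarrow> real"
  assumes I: "I \<noteq> {}"
    and convex: "\<And>i. i \<in> I \<Longrightarrow> weakly_convex_on \<rho> S (\<phi> i)"
    and bdd: "\<And>x. x \<in> S \<Longrightarrow> bdd_above ((\<lambda>i. \<phi> i x) ` I)"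
  shows "weakly_convex_on \<rho> S (\<lambda>x. SUP i\<in>I. \<phi> i x)"
  unfolding weakly_convex_on_def convex_on_def
proof (intro conjI ballI allI impI)
  show "convex S"
    using I convex by (auto simp: weakly_convex_on_def convex_on_def)
next
  fix x y and u v :: real
  assume x: "x \<in> S" and y: "y \<in> S" and u: "0 \<le> u" and v: "0 \<le> v" and uv: "u + v = 1"
  define q where "q = (\<lambda>x::'a. \<rho> / 2 * (norm x)^2)"
  define z where "z = u *\<^sub>R x + v *\<^sub>R y"
  have "\<phi> i z \<le> u * ((SUP i\<in>I. \<phi> i x) + q x) + v * ((SUP i\<in>I. \<phi> i y) + q y) - q z"
    if i: "i \<in> I" for i
  proof -
    have "\<phi> i z + q z \<le> u * (\<phi> i x + q x) + v * (\<phi> i y + q y)"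
      using convex[OF i] x y u v uv unfolding weakly_convex_on_def convex_on_def z_def q_def by blast
    also have "\<dots> \<le> u * ((SUP i\<in>I. \<phi> i x) + q x) + v * ((SUP i\<in>I. \<phi> i y) + q y)"
      using cSUP_upper[OF i bdd[OF x]] cSUP_upper[OF i bdd[OF y]] u v
      by (intro add_mono mult_left_mono) auto
    finally show ?thesis by simp
  qed
  then have "(SUP i\<in>I. \<phi> i z) \<le> u * ((SUP i\<in>I. \<phi> i x) + q x) + v * ((SUP i\<in>I. \<phi> i y) + q y) - q z"
    using I by (intro cSUP_least) auto
  then show "(SUP i\<in>I. \<phi> i (u *\<^sub>R x + v *\<^sub>R y)) + \<rho> / 2 * (norm (u *\<^sub>R x + v *\<^sub>R y))^2
      \<le> u * ((SUP i\<in>I. \<phi> i x) + \<rho> / 2 * (norm x)^2) + v * ((SUP i\<in>I. \<phi> i y) + \<rho> / 2 * (norm y)^2)"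
    unfolding z_def q_def by simp
qed

lemma lipschitz_on_blinfun_compose:
  fixes f' :: "'b::real_normed_vector \<Rightarrow> 'b \<Rightarrow>\<^sub>L 'c::real_normed_vector"
    and h' :: "'a::metric_space \<Rightarrow> 'd::real_normed_vector \<Rightarrow>\<^sub>L 'b"
  assumes hC: "h ` S \<subseteq> C"
    and h: "Lh-lipschitz_on S h"
    and h': "Lh'-lipschitz_on S h'" and h'_bound: "\<And>x. x \<in> S \<Longrightarrow> norm (h' x) \<le> Bh'"
    and f': "Lf'-lipschitz_on C f'" and f'_bound: "\<And>y. y \<in> C \<Longrightarrow> norm (f' y) \<le> Bf'"
    and nonneg: "0 \<le> Bh'" "0 \<le> Bf'"
  shows "(Lf' * Lh * Bh' + Bf' * Lh')-lipschitz_on S (\<lambda>x. f' (h x) o\<^sub>L h' x)"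
proof (rule lipschitz_onI)
  fix x y assume x: "x \<in> S" and y: "y \<in> S"
  have "(f' (h x) o\<^sub>L h' x) - (f' (h y) o\<^sub>L h' y)
      = ((f' (h x) - f' (h y)) o\<^sub>L h' x) + (f' (h y) o\<^sub>L (h' x - h' y))"
    unfolding bounded_bilinear.diff_left[OF bounded_bilinear_blinfun_compose]
      bounded_bilinear.diff_right[OF bounded_bilinear_blinfun_compose] by simp
  also have "norm \<dots> \<le> norm (f' (h x) - f' (h y)) * norm (h' x) + norm (f' (h y)) * norm (h' x - h' y)"
    by (intro norm_triangle_le add_mono norm_blinfun_compose)
  also have "\<dots> \<le> (Lf' * (Lh * dist x y)) * Bh' + Bf' * (Lh' * dist x y)"
  proof (intro add_mono mult_mono)
    show "norm (f' (h x) - f' (h y)) \<le> Lf' * (Lh * dist x y)"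
      using lipschitz_onD[OF f'] lipschitz_onD[OF h x y] lipschitz_on_nonneg[OF f'] hC x y
      by (metis dist_norm image_subset_iff mult_left_mono order_trans)
    show "norm (h' x - h' y) \<le> Lh' * dist x y"
      using lipschitz_onD[OF h' x y] by (simp add: dist_norm)
  qed (use h'_bound f'_bound hC x y nonneg lipschitz_on_nonneg[OF f'] lipschitz_on_nonneg[OF h] in auto)
  finally show "dist (f' (h x) o\<^sub>L h' x) (f' (h y) o\<^sub>L h' y) \<le> (Lf' * Lh * Bh' + Bf' * Lh') * dist x y"
    by (simp add: dist_norm algebra_simps)
next
  show "0 \<le> Lf' * Lh * Bh' + Bf' * Lh'"
    using nonneg lipschitz_on_nonneg[OF f'] lipschitz_on_nonneg[OF h] lipschitz_on_nonneg[OF h'] by simp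
qed

lemma lipschitz_on_blinfun_compose_left:
  assumes "L-lipschitz_on S h'"
  shows "(norm e * L)-lipschitz_on S (\<lambda>x. e o\<^sub>L h' x)"
proof (rule lipschitz_onI)
  fix x y assume "x \<in> S" "y \<in> S"
  have "dist (e o\<^sub>L h' x) (e o\<^sub>L h' y) = norm (e o\<^sub>L (h' x - h' y))"
    by (simp add: dist_norm bounded_bilinear.diff_right[OF bounded_bilinear_blinfun_compose])
  also have "\<dots> \<le> norm e * norm (h' x - h' y)"
    by (rule norm_blinfun_compose)
  also have "\<dots> \<le> norm e * (L * dist x y)"
    using lipschitz_onD[OF assms \<open>x \<in> S\<close> \<open>y \<in> S\<close>] by (intro mult_left_mono) (auto simp: dist_norm)
  finally show "dist (e o\<^sub>L h' x) (e o\<^sub>L h' y) \<le> norm e * L * dist x y"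
    by (simp add: mult.assoc)
qed (use lipschitz_on_nonneg[OF assms] in simp)

lemma C2_on_UNIV_derivative_lipschitz_on:
  fixes f :: "'a::real_normed_vector \<Rightarrow> 'b::real_normed_vector"
  assumes "C2_on UNIV f" and C: "compact C" "convex C"
  obtains f' K B where "\<And>p. (f has_derivative blinfun_apply (f' p)) (at p)"
    and "K-lipschitz_on C f'" and "B \<ge> 0" "\<And>p. p \<in> C \<Longrightarrow> norm (f' p) \<le> B"
proof -
  obtain f' f'' where f': "\<And>p. (f has_derivative blinfun_apply (f' p)) (at p)"
    and f'': "\<And>p. (f' has_derivative blinfun_apply (f'' p)) (at p)"
    and f''_cont: "continuous_on UNIV f''"
    using assms(1) unfolding C2_on_def by blast
  obtain K where "K \<ge> 0" and K: "\<And>p. p \<in> C \<Longrightarrow> norm (f'' p) \<le> K"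
    using continuous_on_compact_bound[OF C(1) continuous_on_subset[OF f''_cont]] by blast
  have f'_lip: "K-lipschitz_on C f'"
    using K \<open>K \<ge> 0\<close>
    by (intro bounded_derivative_imp_lipschitz[OF has_derivative_at_withinI[OF f''] C(2)])
      (auto simp: norm_blinfun.rep_eq)
  obtain B where "B \<ge> 0" "\<And>p. p \<in> C \<Longrightarrow> norm (f' p) \<le> B"
    using continuous_on_compact_bound[OF C(1) lipschitz_on_continuous_on[OF f'_lip]] by blast
  with f' f'_lip show ?thesis using that by blast
qed

lemma C2_compose_uniform_lipschitz_derivative:
  fixes F :: "'w::euclidean_space \<times> 'y::euclidean_space \<Rightarrow> real"
    and h :: "'a::real_normed_vector \<Rightarrow> 'y"
  assumes F: "C2_on UNIV F"
    and \<W>: "compact \<W>" and \<Theta>: "compact \<Theta>"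
    and h_lip: "L0-lipschitz_on \<Theta> h"
    and h_der: "\<And>\<theta>. \<theta> \<in> \<Theta> \<Longrightarrow> (h has_derivative blinfun_apply (h' \<theta>)) (at \<theta>)"
    and h'_lip: "L1-lipschitz_on \<Theta> h'"
  obtains L D where "L > 0"
    and "\<And>W \<theta>. W \<in> \<W> \<Longrightarrow> \<theta> \<in> \<Theta> \<Longrightarrow>
           ((\<lambda>\<theta>. F (W, h \<theta>)) has_derivative blinfun_apply (D W \<theta>)) (at \<theta>)"
    and "\<And>W. W \<in> \<W> \<Longrightarrow> L-lipschitz_on \<Theta> (D W)"
proof -
  have "compact (h ` \<Theta>)"
    using compact_continuous_image[OF lipschitz_on_continuous_on[OF h_lip] \<Theta>] .
  then have "bounded (\<W> \<times> h ` \<Theta>)"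
    using \<W> by (intro bounded_Times compact_imp_bounded)
  then obtain c R where C: "\<W> \<times> h ` \<Theta> \<subseteq> cball c R"
    unfolding bounded_subset_cball by blast
  obtain F' K B where F': "\<And>p. (F has_derivative blinfun_apply (F' p)) (at p)"
    and F'_lip: "K-lipschitz_on (cball c R) F'"
    and "B \<ge> 0" and F'_bound: "\<And>p. p \<in> cball c R \<Longrightarrow> norm (F' p) \<le> B"
    using C2_on_UNIV_derivative_lipschitz_on[OF F compact_cball convex_cball] by blast
  obtain Kh where "Kh \<ge> 0" and Kh: "\<And>\<theta>. \<theta> \<in> \<Theta> \<Longrightarrow> norm (h' \<theta>) \<le> Kh"
    using continuous_on_compact_bound[OF \<Theta> lipschitz_on_continuous_on[OF h'_lip]] by blast
  define e where "e = Blinfun (\<lambda>y::'y. (0::'w, y))"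
  have e_apply: "blinfun_apply e y = (0, y)" for y
    unfolding e_def by (simp add: bounded_linear_Blinfun_apply bounded_linear_Pair)
  define L where "L = K * L0 * (norm e * Kh) + B * (norm e * L1) + 1"
  define D where "D W \<theta> = F' (W, h \<theta>) o\<^sub>L (e o\<^sub>L h' \<theta>)" for W \<theta>
  show ?thesis
  proof
    show "L > 0"
      unfolding L_def using \<open>B \<ge> 0\<close> \<open>Kh \<ge> 0\<close> lipschitz_on_nonneg[OF F'_lip]
        lipschitz_on_nonneg[OF h_lip] lipschitz_on_nonneg[OF h'_lip]
      by (intro add_nonneg_pos add_nonneg_nonneg mult_nonneg_nonneg) auto
  next
    fix W \<theta> assume "W \<in> \<W>" "\<theta> \<in> \<Theta>"
    have "((\<lambda>\<theta>. (W, h \<theta>)) has_derivative (\<lambda>d. (0, h' \<theta> d))) (at \<theta>)"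
      using h_der[OF \<open>\<theta> \<in> \<Theta>\<close>] by (auto intro: has_derivative_Pair)
    from has_derivative_compose[OF this F']
    show "((\<lambda>\<theta>. F (W, h \<theta>)) has_derivative blinfun_apply (D W \<theta>)) (at \<theta>)"
      by (simp add: D_def blinfun_compose.rep_eq e_apply comp_def)
  next
    fix W assume "W \<in> \<W>"
    have "(K * L0 * (norm e * Kh) + B * (norm e * L1))-lipschitz_on \<Theta> (D W)"
      unfolding D_def
    proof (rule lipschitz_on_blinfun_compose[OF _ _ lipschitz_on_blinfun_compose_left[OF h'_lip]])
      show "(\<lambda>\<theta>. (W, h \<theta>)) ` \<Theta> \<subseteq> cball c R"
        using C \<open>W \<in> \<W>\<close> by auto
      show "L0-lipschitz_on \<Theta> (\<lambda>\<theta>. (W, h \<theta>))"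
        using h_lip by (simp add: lipschitz_on_def dist_Pair_Pair)
      show "norm (e o\<^sub>L h' \<theta>) \<le> norm e * Kh" if "\<theta> \<in> \<Theta>" for \<theta>
        using norm_blinfun_compose[of e "h' \<theta>"] Kh[OF that]
        by (meson mult_left_mono norm_ge_zero order_trans)
    qed (use F'_lip F'_bound \<open>B \<ge> 0\<close> \<open>Kh \<ge> 0\<close> in auto)
    then show "L-lipschitz_on \<Theta> (D W)"
      by (rule lipschitz_on_mono) (auto simp: L_def)
  qed
qed

lemma weakly_convex_on_SUP_C2_compose:
  fixes F :: "'w::euclidean_space \<times> 'y::euclidean_space \<Rightarrow> real"
    and h :: "'a::real_inner \<Rightarrow> 'y"
  assumes F: "C2_on UNIV F"
    and \<W>: "compact \<W>" "\<W> \<noteq> {}" and \<Theta>: "compact \<Theta>" "convex \<Theta>"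
    and h_lip: "L0-lipschitz_on \<Theta> h"
    and h_der: "\<And>\<theta>. \<theta> \<in> \<Theta> \<Longrightarrow> (h has_derivative blinfun_apply (h' \<theta>)) (at \<theta>)"
    and h'_lip: "L1-lipschitz_on \<Theta> h'"
  shows "\<exists>\<rho>>0. weakly_convex_on \<rho> \<Theta> (\<lambda>\<theta>. SUP W\<in>\<W>. F (W, h \<theta>))"
proof -
  obtain L D where "L > 0"
    and D: "\<And>W \<theta>. W \<in> \<W> \<Longrightarrow> \<theta> \<in> \<Theta> \<Longrightarrow>
           ((\<lambda>\<theta>. F (W, h \<theta>)) has_derivative blinfun_apply (D W \<theta>)) (at \<theta>)"
    and D_lip: "\<And>W. W \<in> \<W> \<Longrightarrow> L-lipschitz_on \<Theta> (D W)"
    using C2_compose_uniform_lipschitz_derivative[OF F \<W>(1) \<Theta>(1) h_lip h_der h'_lip] by blast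
  have "weakly_convex_on L \<Theta> (\<lambda>\<theta>. F (W, h \<theta>))" if "W \<in> \<W>" for W
    using weakly_convex_on_if_lipschitz_derivative[OF \<Theta>(2) D[OF that] D_lip[OF that]] .
  moreover have "bdd_above ((\<lambda>W. F (W, h \<theta>)) ` \<W>)" if "\<theta> \<in> \<Theta>" for \<theta>
  proof -
    obtain F' where "\<And>p. (F has_derivative blinfun_apply (F' p)) (at p)"
      using F unfolding C2_on_def by blast
    then have "continuous_on UNIV F"
      by (intro continuous_at_imp_continuous_on ballI has_derivative_continuous)
    moreover have "compact (\<W> \<times> h ` \<Theta>)"
      using \<W>(1) compact_continuous_image[OF lipschitz_on_continuous_on[OF h_lip] \<Theta>(1)]
      by (rule compact_Times)
    ultimately have "bounded (F ` (\<W> \<times> h ` \<Theta>))"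
      by (metis compact_imp_bounded compact_continuous_image continuous_on_subset subset_UNIV)
    then show ?thesis
      by (rule bdd_above_mono[OF bounded_imp_bdd_above]) (use that in auto)
  qed
  ultimately have "weakly_convex_on L \<Theta> (\<lambda>\<theta>. SUP W\<in>\<W>. F (W, h \<theta>))"
    by (rule weakly_convex_on_SUP[OF \<W>(2)])
  with \<open>L > 0\<close> show ?thesis by blast
qed

theorem lemma3:
  fixes P :: "'x measure"
    and M\<Omega> :: "'o measure"
    and \<omega> :: "'x \<Rightarrow> 'o"
    and \<Theta> :: "(real ^ 's) set"
    and U :: "(real ^ 's) set"
    and \<W> :: "(complex ^ 'm) set"
    and F :: "(complex ^ 'm) \<times> (complex ^ 'm) \<Rightarrow> real"
    and H :: "real ^ 's \<Rightarrow> 'o \<Rightarrow> complex ^ 'm"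
    and B_H L_H0 L_H1 :: real
    and \<rho>t :: "'o \<Rightarrow> real"
  assumes prob: "prob_space P"
    and complete: "complete_measure P"
    and rand_elem: "\<omega> \<in> measurable P M\<Omega>"
    \<comment> \<open>(A1)\<close>
    and A1: "C2_on UNIV F"
    \<comment> \<open>(A2)\<close>
    and A2_Theta: "compact \<Theta>" "convex \<Theta>"
    and A2_W: "compact \<W>" "\<W> \<noteq> {}"
    \<comment> \<open>(A3)\<close>
    and U_open: "open U" and Theta_sub: "\<Theta> \<subseteq> U"
    and A3: "AE \<xi> in P.
       (\<forall>\<theta>\<in>\<Theta>. norm (H \<theta> (\<omega> \<xi>)) \<le> B_H)
     \<and> C2_on U (\<lambda>\<theta>. H \<theta> (\<omega> \<xi>))
     \<and> L_H0-lipschitz_on \<Theta> (\<lambda>\<theta>. H \<theta> (\<omega> \<xi>))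
     \<and> (\<exists>H'. (\<forall>\<theta>\<in>U. ((\<lambda>\<theta>. H \<theta> (\<omega> \<xi>)) has_derivative blinfun_apply (H' \<theta>)) (at \<theta>))
              \<and> L_H1-lipschitz_on \<Theta> H')"
    \<comment> \<open>(A4)\<close>
    and A4_meas: "\<rho>t \<in> borel_measurable M\<Omega>"
    and A4_pos: "\<forall>w. \<rho>t w > 0"
    and A4_int: "integrable P (\<lambda>\<xi>. \<rho>t (\<omega> \<xi>))"
    and A4: "AE \<xi> in P. weakly_concave_on (\<rho>t (\<omega> \<xi>)) \<Theta>
                (\<lambda>\<theta>. SUP W\<in>\<W>. F (W, H \<theta> (\<omega> \<xi>)))"
    \<comment> \<open>(A5)\<close>
    and A5: "\<forall>\<theta>\<in>\<Theta>. \<forall>Wstar :: 'o \<Rightarrow> complex ^ 'm.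
       (\<forall>w. Wstar w \<in> \<W> \<and> (\<forall>W\<in>\<W>. F (W, H \<theta> w) \<le> F (Wstar w, H \<theta> w))) \<longrightarrow>
         (\<lambda>w. F (Wstar w, H \<theta> w)) \<in> borel_measurable M\<Omega>
       \<and> integrable P (\<lambda>\<xi>. (F (Wstar (\<omega> \<xi>), H \<theta> (\<omega> \<xi>)))^2)
       \<and> (\<exists>c. \<forall>w. c \<le> F (Wstar w, H \<theta> w))"
  shows "AE \<xi> in P. \<exists>\<rho>h > 0. weakly_convex_on \<rho>h \<Theta>
            (\<lambda>\<theta>. SUP W\<in>\<W>. F (W, H \<theta> (\<omega> \<xi>)))"
proof -
  have weakly_convex:
    "\<exists>\<rho>h>0. weakly_convex_on \<rho>h \<Theta> (\<lambda>\<theta>. SUP W\<in>\<W>. F (W, H \<theta> w))"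
    if H_lip: "L_H0-lipschitz_on \<Theta> (\<lambda>\<theta>. H \<theta> w)"
      and H_der: "\<exists>H'. (\<forall>\<theta>\<in>U. ((\<lambda>\<theta>. H \<theta> w) has_derivative blinfun_apply (H' \<theta>)) (at \<theta>))
                      \<and> L_H1-lipschitz_on \<Theta> H'"
    for w
  proof -
    obtain H' where H'_der: "\<forall>\<theta>\<in>U. ((\<lambda>\<theta>. H \<theta> w) has_derivative blinfun_apply (H' \<theta>)) (at \<theta>)"
      and H'_lip: "L_H1-lipschitz_on \<Theta> H'"
      using H_der by blast
    have "((\<lambda>\<theta>. H \<theta> w) has_derivative blinfun_apply (H' \<theta>)) (at \<theta>)" if "\<theta> \<in> \<Theta>" for \<theta>
      using H'_der Theta_sub that by blast
    from weakly_convex_on_SUP_C2_compose[OF A1 A2_W A2_Theta H_lip this H'_lip]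
    show ?thesis .
  qed
  show ?thesis
    using A3 by (rule eventually_mono) (use weakly_convex in blast)
qed

end
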